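(* Let $h_{00},h_{11},h_{22},h_{33}>0$, $\beta = \frac{1}{6(\det h)^2}$ with $\det h = h_{00}h_{11}h_{22}h_{33}$, and let $p(x,y)=x^4+x^3y+xy^3+y^4$, $q(x,y)=5x^4+3x^3y-xy^3-3y^4$. Consider $\dot g_{00} = -\beta\, p(g_{11},g_{22})\, g_{00}^3$, $\dot g_{11} = -\beta\, q(g_{11},g_{22})\, g_{00}^2 g_{11}$, $\dot g_{22} = -\beta\, q(g_{22},g_{11})\, g_{00}^2 g_{22}$, $\dot g_{33} = 3\beta\, p(g_{11},g_{22})\, g_{00}^2 g_{33}$, with $g_{ii}(0)=h_{ii}$. Then the solution exists for all $t\ge 0$ and: $g_{00},g_{11},g_{22}\to 0$; $g_{33}$ is increasing and $g_{33}\to\infty$; $g_{11}/g_{22}\to 1$. If $h_{11}=h_{22}$ then, with $\mu = h_{00}^3h_{33}/\det h$, $g_{00} = \mu^{1/2}(24\mu\beta t + h_{11}^{-6})^{-1/6}$, $g_{11}=g_{22} = (24\mu\beta t + h_{11}^{-6})^{-1/6}$, $g_{33} = h_{11}^3 h_{33}(24\mu\beta t + h_{11}^{-6})^{1/2}$. If $h_{11}<h_{22}$, then $g_{11}<g_{22}$ for all $t$, $g_{22}$ is decreasing, $g_{11}/g_{22}$ is increasing, and $(g_{11}g_{22})^{25} = \eta\,(g_{22}-g_{11})^4\left(2g_{22}^2+g_{11}g_{22}+2g_{11}^2\right)^3$ for all $t$, where $\eta = \frac{(h_{11}h_{22})^{25}}{(h_{22}-h_{11})^4(2h_{22}^2+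h_{11}h_{22}+2h_{11}^2)^3}$.
   Context: This system is Bach flow $\partial_t g = B$, $g(0)=h$, on $\mathbb{R}\times Solv$ written in a diagonalizing basis: a left-invariant frame $\{\partial_0,e_1,e_2,e_3\}$ with $[e_i,e_j]=\sum \varepsilon_{ijl}E^{lk}e_k$, $E=\mathrm{diag}(-1,1,0)$, in which the left-invariant product metric is $g=\mathrm{diag}(g_{00},g_{11},g_{22},g_{33})$; $B$ is the Bach tensor. Along the flow $g_{00}g_{11}g_{22}g_{33}=\det h$ is constant. (The case $h_{11}>h_{22}$ is symmetric.) *)

theory Defs
  imports "HOL-Analysis.Analysis"
begin

definition bp :: "real \<Rightarrow> real \<Rightarrow> real" where
  "bp x y = x^4 + x^3*y + x*y^3 + y^4"

definition bq :: "real \<Rightarrow> real \<Rightarrow> real" where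
  "bq x y = 5*x^4 + 3*x^3*y - x*y^3 - 3*y^4"

definition bach_solution ::
  "real \<Rightarrow> real \<Rightarrow> real \<Rightarrow> real \<Rightarrow> real \<Rightarrow>
   (real \<Rightarrow> real) \<Rightarrow> (real \<Rightarrow> real) \<Rightarrow> (real \<Rightarrow> real) \<Rightarrow> (real \<Rightarrow> real) \<Rightarrow> bool" where
  "bach_solution \<beta> h0 h1 h2 h3 g0 g1 g2 g3 \<longleftrightarrow>
     g0 0 = h0 \<and> g1 0 = h1 \<and> g2 0 = h2 \<and> g3 0 = h3 \<and>
     (\<forall>t\<ge>0.
        (g0 has_real_derivative (- \<beta> * bp (g1 t) (g2 t) * (g0 t)^3)) (at t within {0..}) \<and>
        (g1 has_real_derivative (- \<beta> * bq (g1 t) (g2 t) * (g0 t)^2 * g1 t)) (at t within {0..}) \<and>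
        (g2 has_real_derivative (- \<beta> * bq (g2 t) (g1 t) * (g0 t)^2 * g2 t)) (at t within {0..}) \<and>
        (g3 has_real_derivative (3 * \<beta> * bp (g1 t) (g2 t) * (g0 t)^2 * g3 t)) (at t within {0..}))"

end

theory Submission
  imports Defs
begin

text \<open>
  Along the flow the quantities \<open>g0 g1 g2 g3\<close>, \<open>g0\<^sup>2 / (g1 g2)\<close> and \<open>(g1 g2)^25 / shape g1 g2\<close>, where
  \<open>shape x y = (y - x)^4 (2 y\<^sup>2 + x y + 2 x\<^sup>2)^3\<close>, are constant. Since \<open>shape x y\<close> vanishes only for \<open>x = y\<close>,
  the last invariant keeps \<open>g1 = g2\<close> or \<open>g1 < g2\<close> for all time, and it bounds \<open>(1 - g1 / g2)^4\<close> by a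
  multiple of \<open>g2^40\<close>. For \<open>g1 \<le> g2\<close> the ratio \<open>g1 / g2\<close> does not decrease, which gives
  \<open>g2' \<le> - k g2^7\<close>, so \<open>g2 = O(t^(-1/6))\<close>; all limits then follow from the three invariants.

  For existence with \<open>h1 < h2\<close>, the invariants express \<open>g0, g1, g2, g3\<close> through \<open>r = g1 / g2\<close>, which
  solves a scalar equation \<open>r' = F r\<close> with \<open>F > 0\<close> on \<open>(0, 1)\<close> and \<open>F r = O(1 - r)\<close>. Inverting
  \<open>t = \<integral> dr / F r\<close>, which diverges at \<open>r = 1\<close>, gives a solution for all \<open>t \<ge> 0\<close>. For \<open>h1 = h2\<close> the
  solution is explicit, and \<open>h1 > h2\<close> follows by exchanging \<open>g1\<close> and \<open>g2\<close>.
\<close>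

section \<open>Real analysis\<close>

lemma DERIV_at_within_atLeast_imp_at:
  "(f has_real_derivative D) (at x within {a..}) \<Longrightarrow> a < x \<Longrightarrow> (f has_real_derivative D) (at x)"
  using at_within_interior[of x "{a..}"] by simp

lemma continuous_on_atLeast_if_DERIV:
  assumes "\<And>t. t \<ge> a \<Longrightarrow> \<exists>D. (f has_real_derivative D) (at t within {a..})"
  shows "continuous_on {a..} f"
  unfolding continuous_on_eq_continuous_within using assms DERIV_continuous by fastforce

lemma DERIV_zero_imp_constant_atLeast:
  assumes "\<And>t. t \<ge> a \<Longrightarrow> (f has_real_derivative 0) (at t within {a..})" and "t \<ge> a"
  shows "f t = f a"
proof -
  obtain c where "\<forall>x\<in>{a..}. f x = c"
    using has_field_derivative_zero_constant[of "{a..}" f] assms(1) by (auto simp: convex_real_interval)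
  then show ?thesis
    using assms(2) by auto
qed

lemma pos_if_continuous_nonvanishing:
  fixes f :: "real \<Rightarrow> real"
  assumes "continuous_on {a..} f" "f a > 0" "\<And>t. t \<ge> a \<Longrightarrow> f t \<noteq> 0" "t \<ge> a"
  shows "f t > 0"
proof (rule ccontr)
  assume "\<not> f t > 0"
  then obtain s where "a \<le> s" "s \<le> t" "f s = 0"
    using IVT2'[of f t 0 a] assms continuous_on_subset[OF assms(1), of "{a..t}"] by force
  then show False
    using assms(3) by auto
qed

lemma DERIV_divide_proportional:
  assumes "(f has_real_derivative k * f x) (at x within S)" "(g has_real_derivative k * g x) (at x within S)"
    and "g x \<noteq> 0"
  shows "((\<lambda>t. f t / g t) has_real_derivative 0) (at x within S)"
  using DERIV_divide[OF assms] by (simp add: algebra_simps)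

lemma DERIV_power_proportional:
  assumes "(f has_real_derivative k * f x) (at x within S)"
  shows "((\<lambda>t. f t ^ n) has_real_derivative (of_nat n * k) * f x ^ n) (at x within S)"
  using DERIV_power[OF assms, of n] by (cases n) (simp_all add: algebra_simps)

lemma DERIV_inverse_power:
  assumes "(f has_real_derivative D) (at x within S)" "f x \<noteq> 0"
  shows "((\<lambda>t. inverse (f t ^ n)) has_real_derivative - of_nat n * D / f x ^ Suc n) (at x within S)"
proof (cases n)
  case (Suc m)
  have der: "((\<lambda>t. f t ^ n) has_real_derivative of_nat n * D * f x ^ m) (at x within S)"
    using DERIV_power[OF assms(1), of n] by (simp add: Suc ac_simps)
  have "- (of_nat n * D * f x ^ m * inverse ((f x ^ n) ^ Suc (Suc 0))) = - of_nat n * D / f x ^ Suc n"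
    using assms(2) by (simp add: Suc field_simps)
  with DERIV_inverse_fun[OF der] show ?thesis
    using assms(2) by simp
qed simp

lemma DERIV_inverse_function_open:
  fixes T R :: "real \<Rightarrow> real"
  assumes "open S" "x \<in> S" "continuous_on S T" "\<And>z. z \<in> S \<Longrightarrow> R (T z) = z"
    and "(T has_real_derivative D) (at x)" "D \<noteq> 0"
  shows "(R has_real_derivative inverse D) (at (T x))"
proof -
  have "(*) D \<circ> (*) (inverse D) = id"
    using \<open>D \<noteq> 0\<close> by (auto simp: fun_eq_iff)
  then show ?thesis
    using has_derivative_inverse_strong[OF assms(1-4), of "(*) D"] assms(5)
    unfolding has_field_derivative_def by blast
qed

lemma strict_mono_on_atLeast_if_DERIV_pos:
  fixes f :: "real \<Rightarrow> real"
  assumes "continuous_on {a..} f" "\<And>t. t > a \<Longrightarrow> \<exists>D. (f has_real_derivative D) (at t) \<and> D > 0"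
  shows "strict_mono_on {a..} f"
proof (rule monotone_onI)
  fix x y :: real
  assume "x \<in> {a..}" "y \<in> {a..}" "x < y"
  then show "f x < f y"
    using DERIV_pos_imp_increasing_open[of x y f] assms continuous_on_subset[OF assms(1), of "{x..y}"] by auto
qed

lemma strict_antimono_on_atLeast_if_DERIV_neg:
  fixes f :: "real \<Rightarrow> real"
  assumes "continuous_on {a..} f" "\<And>t. t > a \<Longrightarrow> \<exists>D. (f has_real_derivative D) (at t) \<and> D < 0"
  shows "strict_antimono_on {a..} f"
proof (rule monotone_onI)
  fix x y :: real
  assume "x \<in> {a..}" "y \<in> {a..}" "x < y"
  then show "f y < f x"
    using DERIV_neg_imp_decreasing_open[of x y f] assms continuous_on_subset[OF assms(1), of "{x..y}"] by auto
qed

lemma tendsto_0_if_power_tendsto_0: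
  fixes f :: "'a \<Rightarrow> real"
  assumes "((\<lambda>x. f x ^ n) \<longlongrightarrow> 0) F" "n > 0"
  shows "(f \<longlongrightarrow> 0) F"
proof -
  have "((\<lambda>x. root n \<bar>f x ^ n\<bar>) \<longlongrightarrow> root n \<bar>0\<bar>) F"
    by (intro tendsto_intros assms(1))
  moreover have "root n \<bar>f x ^ n\<bar> = \<bar>f x\<bar>" for x
    using assms(2) by (simp add: power_abs real_root_power_cancel)
  ultimately show ?thesis
    by (simp add: tendsto_rabs_zero_iff)
qed

text \<open>Comparison with the explicit solution of \<open>y' = -k y^(m+1)\<close>: \<open>y^-m - m k t\<close> is nondecreasing,
  so \<open>y t ^ m \<le> 1 / (m k t)\<close>.\<close>
lemma tendsto_0_if_DERIV_le_neg_power: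
  fixes y :: "real \<Rightarrow> real"
  assumes cont: "continuous_on {0..} y" and pos: "\<And>t. t \<ge> 0 \<Longrightarrow> y t > 0"
    and "k > 0" "m > 0"
    and der: "\<And>t. t > 0 \<Longrightarrow> \<exists>D. (y has_real_derivative D) (at t) \<and> D \<le> - k * y t ^ Suc m"
  shows "(y \<longlongrightarrow> 0) at_top"
proof -
  define W where "W s = inverse (y s ^ m) - m * k * s" for s
  have bound: "y t ^ m \<le> 1 / (m * k * t)" if t: "t > 0" for t
  proof -
    have "W 0 \<le> W t"
    proof (rule DERIV_nonneg_imp_increasing_open[of 0 t W])
      fix s :: real
      assume s: "0 < s" "s < t"
      obtain D where D: "(y has_real_derivative D) (at s)" "D \<le> - k * y s ^ Suc m"
        using der s by blast
      have "(W has_real_derivative - real m * D / y s ^ Suc m - real m * k) (at s)"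
        unfolding W_def
        by (rule DERIV_diff[OF DERIV_inverse_power[OF D(1)]]) (use pos[of s] s in \<open>auto intro!: derivative_eq_intros\<close>)
      moreover have "k \<le> - D / y s ^ Suc m"
        using D(2) pos[of s] s by (simp add: field_simps)
      then have "0 \<le> - real m * D / y s ^ Suc m - real m * k"
        using mult_left_mono[of k "- D / y s ^ Suc m" "real m"] by simp
      ultimately show "\<exists>D'. (W has_real_derivative D') (at s) \<and> 0 \<le> D'"
        by blast
    next
      show "continuous_on {0..t} W"
        unfolding W_def using pos
        by (intro continuous_intros continuous_on_subset[OF cont]) (auto simp: less_imp_neq[symmetric])
    qed (use t in simp)
    moreover have "0 < inverse (y 0 ^ m)"
      using pos[of 0] by simp
    ultimately have "m * k * t \<le> inverse (y t ^ m)"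
      unfolding W_def by linarith
    then show ?thesis
      using t \<open>k > 0\<close> \<open>m > 0\<close> pos[of t] by (simp add: field_simps)
  qed
  have "((\<lambda>t. inverse (m * k) * inverse t) \<longlongrightarrow> inverse (m * k) * 0) at_top"
    by (intro tendsto_intros tendsto_inverse_0_at_top filterlim_ident)
  then have lim: "((\<lambda>t. 1 / (m * k * t)) \<longlongrightarrow> 0) at_top"
    by (simp add: field_simps)
  have "\<forall>\<^sub>F t in at_top. 0 \<le> y t ^ m"
    using eventually_ge_at_top[of 0] by eventually_elim (use pos in \<open>simp add: less_imp_le\<close>)
  moreover have "\<forall>\<^sub>F t in at_top. y t ^ m \<le> 1 / (m * k * t)"
    using eventually_gt_at_top[of 0] by eventually_elim (rule bound)
  ultimately have "((\<lambda>t. y t ^ m) \<longlongrightarrow> 0) at_top"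
    by (rule tendsto_sandwich[OF _ _ tendsto_const lim])
  then show ?thesis
    using tendsto_0_if_power_tendsto_0 \<open>m > 0\<close> by blast
qed

lemma DERIV_integral_open:
  assumes "continuous_on {l<..<u} w" "l < a" "a < r" "r < u"
  shows "((\<lambda>x. integral {a..x} w) has_real_derivative w r) (at r)"
proof -
  define b where "b = (r + u) / 2"
  have "continuous_on {a..b} w"
    using assms by (intro continuous_on_subset[OF assms(1)]) (auto simp: b_def)
  then have "((\<lambda>x. integral {a..x} w) has_real_derivative w r) (at r within {a..b})"
    by (rule integral_has_real_derivative) (use assms in \<open>auto simp: b_def\<close>)
  moreover have "r \<in> interior {a..b}"
    using assms by (auto simp: b_def)
  ultimately show ?thesis
    by (metis at_within_interior)
qed

text \<open>Since \<open>T x + ln (1 - x) / C\<close> is nondecreasing, \<open>y\<close> is reached before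
  \<open>x = 1 - (1 - r0) exp (- C (y - T r0))\<close>.\<close>
lemma exists_preimage_if_DERIV_ge_inverse_distance:
  fixes T w :: "real \<Rightarrow> real"
  assumes "r0 < 1" "C > 0" "T r0 \<le> y"
    and der: "\<And>x. r0 \<le> x \<Longrightarrow> x < 1 \<Longrightarrow> (T has_real_derivative w x) (at x) \<and> 1 / (C * (1 - x)) \<le> w x"
  shows "\<exists>r. r0 \<le> r \<and> r < 1 \<and> T r = y"
proof -
  define r1 where "r1 = 1 - (1 - r0) * exp (- C * (y - T r0))"
  have "(1 - r0) * exp (- C * (y - T r0)) \<le> (1 - r0) * 1"
    using assms by (intro mult_left_mono) auto
  moreover have "(1 - r0) * exp (- C * (y - T r0)) > 0"
    using assms by simp
  ultimately have r1: "r0 \<le> r1" "r1 < 1"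
    by (auto simp: r1_def)
  define V where "V x = T x + ln (1 - x) / C" for x
  have "V r0 \<le> V r1"
  proof (rule DERIV_nonneg_imp_nondecreasing[OF r1(1)])
    fix x
    assume x: "r0 \<le> x" "x \<le> r1"
    have "(V has_real_derivative w x - 1 / (C * (1 - x))) (at x)"
      unfolding V_def using x r1 der[of x] \<open>C > 0\<close>
      by (auto intro!: derivative_eq_intros simp: field_simps)
    then show "\<exists>D. (V has_real_derivative D) (at x) \<and> 0 \<le> D"
      using der[of x] x r1 by force
  qed
  moreover have "ln (1 - r1) / C = ln (1 - r0) / C - (y - T r0)"
  proof -
    have "ln (1 - r1) = ln (1 - r0) - C * (y - T r0)"
      using assms by (simp add: r1_def ln_mult)
    then show ?thesis
      using \<open>C > 0\<close> by (simp add: diff_divide_distrib)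
  qed
  ultimately have "y \<le> T r1"
    unfolding V_def by linarith
  moreover have "continuous_on {r0..r1} T"
    using der r1 by (intro continuous_at_imp_continuous_on ballI DERIV_isCont) force
  ultimately obtain r where "r0 \<le> r" "r \<le> r1" "T r = y"
    using IVT'[of T r0 y r1] assms(3) r1(1) by blast
  then show ?thesis
    using r1(2) by (intro exI[of _ r]) simp
qed

lemma DERIV_inverse_of_increasing:
  fixes T w :: "real \<Rightarrow> real"
  assumes der: "\<And>x. a < x \<Longrightarrow> x < b \<Longrightarrow> (T has_real_derivative w x) (at x) \<and> w x > 0"
  obtains R where "\<And>z. z \<in> {a<..<b} \<Longrightarrow> R (T z) = z"
    and "\<And>z. z \<in> {a<..<b} \<Longrightarrow> (R has_real_derivative inverse (w z)) (at (T z))"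
proof -
  have T_less: "T x < T y" if "a < x" "x < y" "y < b" for x y
  proof (rule DERIV_pos_imp_increasing[OF that(2)])
    fix s
    assume "x \<le> s" "s \<le> y"
    then show "\<exists>D. (T has_real_derivative D) (at s) \<and> D > 0"
      using der[of s] that by force
  qed
  define R where "R y = (THE r. r \<in> {a<..<b} \<and> T r = y)" for y
  have R_T: "R (T z) = z" if "z \<in> {a<..<b}" for z
    unfolding R_def
  proof (rule the_equality)
    fix r
    assume "r \<in> {a<..<b} \<and> T r = T z"
    then show "r = z"
      using T_less[of r z] T_less[of z r] that by (cases r z rule: linorder_cases) auto
  qed (use that in simp)
  have "(R has_real_derivative inverse (w z)) (at (T z))" if "z \<in> {a<..<b}" for z
  proof (rule DERIV_inverse_function_open[of "{a<..<b}" z T R])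
    show "continuous_on {a<..<b} T"
      using der by (intro continuous_at_imp_continuous_on ballI DERIV_isCont) force
  qed (use der that R_T in \<open>auto simp: less_imp_neq[symmetric]\<close>)
  with R_T that show ?thesis
    by blast
qed

text \<open>The solution of \<open>r' = F r\<close> is the inverse of the time map \<open>T r = \<integral> 1 / F\<close>, which the bound on \<open>F\<close> makes
  unbounded as \<open>r \<rightarrow> 1\<close>.\<close>
lemma exists_solution_autonomous_ode:
  fixes F :: "real \<Rightarrow> real"
  assumes r0: "0 < r0" "r0 < 1" and F_cont: "continuous_on {0<..<1} F"
    and F_pos: "\<And>r. 0 < r \<Longrightarrow> r < 1 \<Longrightarrow> F r > 0"
    and F_le: "C > 0" "\<And>r. r0 \<le> r \<Longrightarrow> r < 1 \<Longrightarrow> F r \<le> C * (1 - r)"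
  shows "\<exists>R. R 0 = r0 \<and> (\<forall>t\<ge>0. r0 \<le> R t \<and> R t < 1 \<and> (R has_real_derivative F (R t)) (at t))"
proof -
  define a where "a = r0 / 2"
  define w where "w r = 1 / F r" for r
  define T where "T r = integral {a..r} w - integral {a..r0} w" for r
  have w_cont: "continuous_on {0<..<1} w"
    unfolding w_def using F_pos by (intro continuous_intros F_cont) force
  have T_der: "(T has_real_derivative w r) (at r) \<and> w r > 0" if "a < r" "r < 1" for r
    unfolding T_def using that r0 F_pos[of r]
    by (auto intro!: derivative_eq_intros DERIV_integral_open[OF w_cont] simp: a_def w_def)
  obtain R where R_T: "\<And>z. z \<in> {a<..<1} \<Longrightarrow> R (T z) = z"
    and R_der: "\<And>z. z \<in> {a<..<1} \<Longrightarrow> (R has_real_derivative inverse (w z)) (at (T z))"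
    using DERIV_inverse_of_increasing[of a 1 T w] T_der by blast
  have R_range: "r0 \<le> R t \<and> R t < 1 \<and> T (R t) = t" if t: "t \<ge> 0" for t
  proof -
    obtain r where r: "r0 \<le> r" "r < 1" "T r = t"
    proof (rule exists_preimage_if_DERIV_ge_inverse_distance[OF r0(2) F_le(1), THEN exE])
      fix x
      assume x: "r0 \<le> x" "x < 1"
      have "1 / (C * (1 - x)) \<le> w x"
        unfolding w_def using F_le(2)[OF x] F_pos[of x] x r0 F_le(1)
        by (intro divide_left_mono) auto
      then show "(T has_real_derivative w x) (at x) \<and> 1 / (C * (1 - x)) \<le> w x"
        using T_der x r0 by (simp add: a_def)
    qed (use t in \<open>auto simp: T_def\<close>)
    then have "R t = r"
      using R_T[of r] r0 by (auto simp: a_def)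
    then show ?thesis
      using r by simp
  qed
  have "(R has_real_derivative F (R t)) (at t)" if "t \<ge> 0" for t
  proof -
    have "R t \<in> {a<..<1}"
      using R_range[OF that] r0 by (auto simp: a_def)
    with R_der R_range[OF that] show ?thesis
      by (fastforce simp: w_def)
  qed
  moreover have "R 0 = r0"
    using R_T[of r0] r0 by (simp add: T_def a_def)
  ultimately show ?thesis
    using R_range by (intro exI[of _ R]) simp
qed

section \<open>The polynomials of the flow\<close>

lemma bp_pos: "0 < x \<Longrightarrow> 0 < y \<Longrightarrow> 0 < bp x y"
  unfolding bp_def by (intro add_pos_pos mult_pos_pos zero_less_power) auto

lemma bp_commute: "bp x y = bp y x"
  by (simp add: bp_def algebra_simps)

lemma double_bp_eq_bq_sum: "2 * bp x y = bq x y + bq y x"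
  by (simp add: bp_def bq_def algebra_simps)

lemma bq_diag: "bq x x = 4 * x ^ 4"
  by (simp add: bq_def algebra_simps eval_nat_numeral)

lemma bq_scale: "bq (s * x) (s * y) = s ^ 4 * bq x y"
  by (simp add: bq_def algebra_simps eval_nat_numeral)

lemma bq_diff: "bq y x - bq x y = 4 * (y - x) * (2 * y^3 + 3 * y^2 * x + 3 * y * x^2 + 2 * x^3)"
  by (simp add: bq_def algebra_simps eval_nat_numeral)

lemma bq_ge:
  assumes "0 < x" "x \<le> y"
  shows "2 * y^4 \<le> bq y x"
proof -
  have "x^4 \<le> y^4" "x^2 \<le> y^2"
    using assms by (auto intro!: power_mono)
  moreover have "0 \<le> y^2"
    by simp
  ultimately have "x^4 \<le> y^4" "x^2 \<le> 3 * y^2"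
    by linarith+
  then have "0 \<le> 3 * (y^4 - x^4) + x * y * (3 * y^2 - x^2)"
    using assms by (intro add_nonneg_nonneg mult_nonneg_nonneg) auto
  moreover have "bq y x - 2 * y^4 = 3 * (y^4 - x^4) + x * y * (3 * y^2 - x^2)"
    by (simp add: bq_def algebra_simps eval_nat_numeral)
  ultimately show ?thesis
    by simp
qed

definition shape :: "real \<Rightarrow> real \<Rightarrow> real" where
  "shape x y = (y - x)^4 * (2 * y^2 + x * y + 2 * x^2)^3"

lemma shape_quadratic_pos:
  fixes x y :: real
  assumes "0 < x"
  shows "0 < 2 * y^2 + x * y + 2 * x^2"
proof -
  have "2 * y^2 + x * y + 2 * x^2 = 2 * (y + x / 4)^2 + 15 / 8 * x^2"
    by (simp add: power2_eq_square algebra_simps)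
  then show ?thesis
    using assms by (simp add: add_nonneg_pos)
qed

lemma shape_nonneg: "0 < x \<Longrightarrow> 0 \<le> shape x y"
  unfolding shape_def using shape_quadratic_pos[of x y] by simp

lemma shape_eq_0_iff: "0 < x \<Longrightarrow> shape x y = 0 \<longleftrightarrow> x = y"
  unfolding shape_def using shape_quadratic_pos[of x y] by auto

lemma bq_gap_factor: "bq 1 r - bq r 1 = 4 * (1 - r) * (1 + r) * (2 + r + 2 * r^2)"
  by (simp add: bq_def algebra_simps eval_nat_numeral)

lemma bq_gap_pos: "0 < r \<Longrightarrow> r < 1 \<Longrightarrow> 0 < bq 1 r - bq r 1"
  unfolding bq_gap_factor using shape_quadratic_pos[of 1 r] by (simp add: add.commute)

text \<open>\<open>-50 \<beta> bp x y G\<close> is also the logarithmic derivative of \<open>(x y)^25\<close> along the flow: this is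
  where the invariant \<open>\<eta>\<close> comes from.\<close>
lemma DERIV_shape:
  fixes x y :: "real \<Rightarrow> real"
  assumes "(x has_real_derivative - \<beta> * bq (x t) (y t) * G * x t) (at t within S)"
    and "(y has_real_derivative - \<beta> * bq (y t) (x t) * G * y t) (at t within S)"
  shows "((\<lambda>s. shape (x s) (y s)) has_real_derivative (-50 * \<beta> * bp (x t) (y t) * G) * shape (x t) (y t))
           (at t within S)"
  unfolding shape_def
  by (rule derivative_eq_intros assms refl)+ (simp add: bp_def bq_def algebra_simps eval_nat_numeral)

section \<open>Properties of solutions\<close>

lemma bach_solution_swap:
  "bach_solution \<beta> h0 h1 h2 h3 g0 g1 g2 g3 \<Longrightarrow> bach_solution \<beta> h0 h2 h1 h3 g0 g2 g1 g3"
  unfolding bach_solution_def by (simp add: bp_commute[of "g2 _"])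

locale bach_flow =
  fixes \<beta> h0 h1 h2 h3 :: real and g0 g1 g2 g3 :: "real \<Rightarrow> real"
  assumes beta_pos: "\<beta> > 0" and h_pos: "h0 > 0" "h1 > 0" "h2 > 0" "h3 > 0"
    and solution: "bach_solution \<beta> h0 h1 h2 h3 g0 g1 g2 g3"
begin

lemma initial: "g0 0 = h0" "g1 0 = h1" "g2 0 = h2" "g3 0 = h3"
  using solution by (auto simp: bach_solution_def)

lemma DERIV_g:
  assumes "t \<ge> 0"
  shows "(g0 has_real_derivative - \<beta> * bp (g1 t) (g2 t) * g0 t ^ 3) (at t within {0..})"
    and "(g1 has_real_derivative - \<beta> * bq (g1 t) (g2 t) * g0 t ^ 2 * g1 t) (at t within {0..})"
    and "(g2 has_real_derivative - \<beta> * bq (g2 t) (g1 t) * g0 t ^ 2 * g2 t) (at t within {0..})"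
    and "(g3 has_real_derivative 3 * \<beta> * bp (g1 t) (g2 t) * g0 t ^ 2 * g3 t) (at t within {0..})"
  using solution assms by (auto simp: bach_solution_def)

lemmas DERIV_g_intros = DERIV_g[THEN DERIV_cong]

lemma DERIV_g_at:
  assumes "t > 0"
  shows "(g1 has_real_derivative - \<beta> * bq (g1 t) (g2 t) * g0 t ^ 2 * g1 t) (at t)"
    and "(g2 has_real_derivative - \<beta> * bq (g2 t) (g1 t) * g0 t ^ 2 * g2 t) (at t)"
    and "(g3 has_real_derivative 3 * \<beta> * bp (g1 t) (g2 t) * g0 t ^ 2 * g3 t) (at t)"
  using DERIV_g[of t] assms by (auto intro: DERIV_at_within_atLeast_imp_at)

lemma continuous_g:
  "continuous_on {0..} g0" "continuous_on {0..} g1" "continuous_on {0..} g2" "continuous_on {0..} g3"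
  by (rule continuous_on_atLeast_if_DERIV, use DERIV_g in blast)+

lemma product_conserved:
  assumes "t \<ge> 0"
  shows "g0 t * g1 t * g2 t * g3 t = h0 * h1 * h2 * h3"
proof -
  have "((\<lambda>t. g0 t * g1 t * g2 t * g3 t) has_real_derivative 0) (at s within {0..})" if "s \<ge> 0" for s
    using that by (auto intro!: derivative_eq_intros DERIV_g_intros
        simp: bp_def bq_def algebra_simps power2_eq_square power3_eq_cube)
  from DERIV_zero_imp_constant_atLeast[OF this assms] show ?thesis
    by (simp add: initial)
qed

lemma g_pos:
  assumes "t \<ge> 0"
  shows "g0 t > 0" "g1 t > 0" "g2 t > 0" "g3 t > 0"
proof -
  have "g0 s \<noteq> 0 \<and> g1 s \<noteq> 0 \<and> g2 s \<noteq> 0 \<and> g3 s \<noteq> 0" if "s \<ge> 0" for s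
    using product_conserved[OF that] h_pos by auto
  then show "g0 t > 0" "g1 t > 0" "g2 t > 0" "g3 t > 0"
    using pos_if_continuous_nonvanishing[OF continuous_g(1)] pos_if_continuous_nonvanishing[OF continuous_g(2)]
      pos_if_continuous_nonvanishing[OF continuous_g(3)] pos_if_continuous_nonvanishing[OF continuous_g(4)]
      initial h_pos assms by auto
qed

lemma DERIV_g1_g2:
  assumes "t \<ge> 0"
  shows "((\<lambda>s. g1 s * g2 s) has_real_derivative (-2 * \<beta> * bp (g1 t) (g2 t) * g0 t ^ 2) * (g1 t * g2 t))
           (at t within {0..})"
  using assms by (auto intro!: derivative_eq_intros DERIV_g_intros
      simp: bp_def bq_def algebra_simps power2_eq_square power3_eq_cube)

lemma g0_sq:
  assumes "t \<ge> 0"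
  shows "g0 t ^ 2 = h0^2 / (h1 * h2) * (g1 t * g2 t)"
proof -
  have "((\<lambda>s. g1 s * g2 s / g0 s ^ 2) has_real_derivative 0) (at s within {0..})" if s: "s \<ge> 0" for s
  proof (rule DERIV_divide_proportional[OF DERIV_g1_g2[OF s]])
    show "((\<lambda>s. g0 s ^ 2) has_real_derivative (-2 * \<beta> * bp (g1 s) (g2 s) * g0 s ^ 2) * g0 s ^ 2)
        (at s within {0..})"
      using s by (auto intro!: derivative_eq_intros DERIV_g_intros simp: algebra_simps power2_eq_square power3_eq_cube)
  qed (use g_pos[OF s] in simp)
  from DERIV_zero_imp_constant_atLeast[OF this assms] have "g1 t * g2 t / g0 t ^ 2 = h1 * h2 / h0 ^ 2"
    by (simp add: initial)
  then show ?thesis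
    using g_pos[OF assms] h_pos by (simp add: field_simps)
qed

lemma shape_conserved:
  assumes "t \<ge> 0"
  shows "shape (g1 t) (g2 t) * (h1 * h2) ^ 25 = (g1 t * g2 t) ^ 25 * shape h1 h2"
proof -
  have "((\<lambda>s. shape (g1 s) (g2 s) / (g1 s * g2 s) ^ 25) has_real_derivative 0) (at s within {0..})"
    if s: "s \<ge> 0" for s
  proof (rule DERIV_divide_proportional)
    show "((\<lambda>s. shape (g1 s) (g2 s)) has_real_derivative
        (-50 * \<beta> * bp (g1 s) (g2 s) * g0 s ^ 2) * shape (g1 s) (g2 s)) (at s within {0..})"
      by (rule DERIV_shape[OF DERIV_g(2,3)[OF s]])
    show "((\<lambda>s. (g1 s * g2 s) ^ 25) has_real_derivative
        (-50 * \<beta> * bp (g1 s) (g2 s) * g0 s ^ 2) * (g1 s * g2 s) ^ 25) (at s within {0..})"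
      using DERIV_power_proportional[OF DERIV_g1_g2[OF s], of 25] by (simp add: algebra_simps)
  qed (use g_pos[OF s] in simp)
  from DERIV_zero_imp_constant_atLeast[OF this assms]
  have "shape (g1 t) (g2 t) / (g1 t * g2 t) ^ 25 = shape h1 h2 / (h1 * h2) ^ 25"
    by (simp add: initial)
  then show ?thesis
    using g_pos[OF assms] h_pos by (simp add: frac_eq_eq mult.commute)
qed

lemma g1_eq_g2_if_eq:
  assumes "h1 = h2" "t \<ge> 0"
  shows "g1 t = g2 t"
proof -
  have "shape h1 h2 = 0"
    using shape_eq_0_iff h_pos assms(1) by simp
  then have "shape (g1 t) (g2 t) = 0"
    using shape_conserved[OF assms(2)] h_pos by simp
  then show ?thesis
    using shape_eq_0_iff g_pos[OF assms(2)] by simp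
qed

lemma g1_less_g2:
  assumes "h1 < h2" "t \<ge> 0"
  shows "g1 t < g2 t"
proof -
  have "shape h1 h2 > 0"
    using shape_nonneg[of h1 h2] shape_eq_0_iff[of h1 h2] h_pos assms(1) by simp
  then have "shape (g1 s) (g2 s) \<noteq> 0" if "s \<ge> 0" for s
    using shape_conserved[OF that] g_pos[OF that] h_pos by auto
  then have nonvanishing: "g2 s - g1 s \<noteq> 0" if "s \<ge> 0" for s
    using shape_eq_0_iff[of "g1 s" "g2 s"] g_pos(2)[OF that] that by auto
  have "continuous_on {0..} (\<lambda>t. g2 t - g1 t)"
    by (intro continuous_intros continuous_g)
  then have "g2 t - g1 t > 0"
    by (rule pos_if_continuous_nonvanishing) (use assms initial nonvanishing in auto)
  then show ?thesis
    by simp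
qed

lemma g1_le_g2:
  assumes "h1 \<le> h2" "t \<ge> 0"
  shows "g1 t \<le> g2 t"
  using g1_eq_g2_if_eq[OF _ assms(2)] g1_less_g2[OF _ assms(2)] assms(1) by fastforce

lemma g3_strict_mono: "strict_mono_on {0..} g3"
proof (rule strict_mono_on_atLeast_if_DERIV_pos[OF continuous_g(4)])
  fix t :: real
  assume "t > 0"
  then show "\<exists>D. (g3 has_real_derivative D) (at t) \<and> D > 0"
    using DERIV_g_at(3)[of t] g_pos[of t] beta_pos bp_pos[of "g1 t" "g2 t"] by force
qed

lemma g2_strict_antimono:
  assumes "h1 < h2"
  shows "strict_antimono_on {0..} g2"
proof (rule strict_antimono_on_atLeast_if_DERIV_neg[OF continuous_g(3)])
  fix t :: real
  assume t: "t > 0"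
  then have "2 * g2 t ^ 4 \<le> bq (g2 t) (g1 t)" "0 < g2 t ^ 4"
    using bq_ge[of "g1 t" "g2 t"] g_pos[of t] g1_less_g2[OF assms, of t] by auto
  then have "0 < bq (g2 t) (g1 t)"
    by linarith
  then have "0 < \<beta> * bq (g2 t) (g1 t) * g0 t ^ 2 * g2 t"
    using g_pos[of t] t beta_pos by simp
  then show "\<exists>D. (g2 has_real_derivative D) (at t) \<and> D < 0"
    using DERIV_g_at(2)[OF t] by force
qed

lemma ratio_strict_mono:
  assumes "h1 < h2"
  shows "strict_mono_on {0..} (\<lambda>t. g1 t / g2 t)"
proof (rule strict_mono_on_atLeast_if_DERIV_pos)
  show "continuous_on {0..} (\<lambda>t. g1 t / g2 t)"
    using g_pos(3) by (intro continuous_intros continuous_g) force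
  fix t :: real
  assume t: "t > 0"
  have "((\<lambda>t. g1 t / g2 t) has_real_derivative
      \<beta> * g0 t ^ 2 * g1 t * (bq (g2 t) (g1 t) - bq (g1 t) (g2 t)) / g2 t) (at t)"
  proof -
    have "g2 t \<noteq> 0"
      using g_pos[of t] t by simp
    have "(- \<beta> * bq (g1 t) (g2 t) * g0 t ^ 2 * g1 t * g2 t - g1 t * (- \<beta> * bq (g2 t) (g1 t) * g0 t ^ 2 * g2 t))
        / (g2 t * g2 t) = \<beta> * g0 t ^ 2 * g1 t * (bq (g2 t) (g1 t) - bq (g1 t) (g2 t)) / g2 t"
      using \<open>g2 t \<noteq> 0\<close> by (simp add: field_simps)
    with DERIV_divide[OF DERIV_g_at(1,2)[OF t] \<open>g2 t \<noteq> 0\<close>] show ?thesis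
      by simp
  qed
  moreover have "bq (g2 t) (g1 t) - bq (g1 t) (g2 t) > 0"
    unfolding bq_diff using g_pos[of t] t g1_less_g2[OF assms, of t] by (intro mult_pos_pos add_pos_pos) auto
  then have "\<beta> * g0 t ^ 2 * g1 t * (bq (g2 t) (g1 t) - bq (g1 t) (g2 t)) / g2 t > 0"
    using g_pos[of t] t beta_pos by simp
  ultimately show "\<exists>D. ((\<lambda>t. g1 t / g2 t) has_real_derivative D) (at t) \<and> D > 0"
    by blast
qed

lemma ratio_ge_initial:
  assumes "h1 \<le> h2" "t \<ge> 0"
  shows "h1 / h2 * g2 t \<le> g1 t"
proof -
  have "g1 0 / g2 0 \<le> g1 t / g2 t"
  proof (cases "h1 = h2")
    case True
    then show ?thesis
      using g1_eq_g2_if_eq[OF True] g_pos[OF assms(2)] initial h_pos assms(2) by simp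
  next
    case False
    then show ?thesis
      using ratio_strict_mono assms by (cases "t = 0") (auto dest: monotone_onD[of _ _ _ _ 0 t])
  qed
  then show ?thesis
    using initial g_pos[OF assms(2)] by (simp add: field_simps)
qed

lemma eta_identity:
  assumes "h1 < h2" "t \<ge> 0"
  shows "(g1 t * g2 t) ^ 25 = (h1 * h2) ^ 25 / shape h1 h2 * shape (g1 t) (g2 t)"
proof -
  have "shape h1 h2 \<noteq> 0"
    using shape_eq_0_iff[of h1 h2] h_pos assms(1) by simp
  then show ?thesis
    using shape_conserved[OF assms(2)] by (simp add: eq_divide_eq mult.commute)
qed


lemma g2_tendsto_0:
  assumes "h1 \<le> h2"
  shows "(g2 \<longlongrightarrow> 0) at_top"
proof -
  define k where "k = 2 * \<beta> * (h0^2 / (h1 * h2)) * (h1 / h2)"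
  have "k > 0"
    using beta_pos h_pos by (simp add: k_def)
  have rate: "- \<beta> * bq (g2 t) (g1 t) * g0 t ^ 2 * g2 t \<le> - k * g2 t ^ Suc 6" if t: "t > 0" for t
  proof -
    have bq_bound: "2 * g2 t ^ 4 \<le> bq (g2 t) (g1 t)"
      using bq_ge g_pos[of t] g1_le_g2[OF assms, of t] t by simp
    have "0 \<le> bq (g2 t) (g1 t)"
      by (rule order_trans[OF _ bq_bound]) simp
    moreover have "h0^2 / (h1 * h2) * (h1 / h2 * g2 t * g2 t) \<le> g0 t ^ 2"
    proof -
      have "h1 / h2 * g2 t * g2 t \<le> g1 t * g2 t"
        using ratio_ge_initial[OF assms, of t] g_pos[of t] t by (intro mult_right_mono) auto
      then have "h0^2 / (h1 * h2) * (h1 / h2 * g2 t * g2 t) \<le> h0^2 / (h1 * h2) * (g1 t * g2 t)"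
        using h_pos by (intro mult_left_mono) auto
      then show ?thesis
        using g0_sq[of t] t by simp
    qed
    ultimately have "(2 * g2 t ^ 4) * (h0^2 / (h1 * h2) * (h1 / h2 * g2 t * g2 t)) \<le> bq (g2 t) (g1 t) * g0 t ^ 2"
      using bq_bound \<open>0 \<le> bq (g2 t) (g1 t)\<close> h_pos g_pos[of t] t by (intro mult_mono) auto
    then have "\<beta> * ((2 * g2 t ^ 4) * (h0^2 / (h1 * h2) * (h1 / h2 * g2 t * g2 t))) * g2 t
        \<le> \<beta> * (bq (g2 t) (g1 t) * g0 t ^ 2) * g2 t"
      using beta_pos g_pos[of t] t by (intro mult_left_mono mult_right_mono) auto
    then show ?thesis
      using h_pos by (simp add: k_def algebra_simps eval_nat_numeral)
  qed
  show ?thesis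
  proof (rule tendsto_0_if_DERIV_le_neg_power[where m = 6, OF continuous_g(3) g_pos(3) \<open>k > 0\<close>])
    show "0 < (6::nat)"
      by simp
    fix t :: real
    assume "t > 0"
    then show "\<exists>D. (g2 has_real_derivative D) (at t) \<and> D \<le> - k * g2 t ^ Suc 6"
      using DERIV_g_at(2) rate by blast
  qed
qed

lemma asymptotics_if_le:
  assumes "h1 \<le> h2"
  shows "(g0 \<longlongrightarrow> 0) at_top \<and> (g1 \<longlongrightarrow> 0) at_top \<and> (g2 \<longlongrightarrow> 0) at_top \<and> filterlim g3 at_top at_top"
proof -
  have g2_lim: "(g2 \<longlongrightarrow> 0) at_top"
    by (rule g2_tendsto_0[OF assms])
  have g1_lim: "(g1 \<longlongrightarrow> 0) at_top"
  proof (rule tendsto_sandwich[OF _ _ tendsto_const g2_lim])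
    show "\<forall>\<^sub>F t in at_top. 0 \<le> g1 t"
      using eventually_ge_at_top[of 0] by eventually_elim (use g_pos(2) in force)
    show "\<forall>\<^sub>F t in at_top. g1 t \<le> g2 t"
      using eventually_ge_at_top[of 0] by eventually_elim (rule g1_le_g2[OF assms])
  qed
  have "((\<lambda>t. h0^2 / (h1 * h2) * (g1 t * g2 t)) \<longlongrightarrow> h0^2 / (h1 * h2) * (0 * 0)) at_top"
    by (intro tendsto_intros g1_lim g2_lim)
  moreover have "\<forall>\<^sub>F t in at_top. h0^2 / (h1 * h2) * (g1 t * g2 t) = g0 t ^ 2"
    using eventually_ge_at_top[of 0] by eventually_elim (simp add: g0_sq)
  ultimately have "((\<lambda>t. g0 t ^ 2) \<longlongrightarrow> 0) at_top"
    by (simp add: tendsto_cong)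
  then have g0_lim: "(g0 \<longlongrightarrow> 0) at_top"
    by (rule tendsto_0_if_power_tendsto_0) simp
  have "((\<lambda>t. g0 t * g1 t * g2 t / (h0 * h1 * h2 * h3)) \<longlongrightarrow> 0 * 0 * 0 / (h0 * h1 * h2 * h3)) at_top"
    by (intro tendsto_intros g0_lim g1_lim g2_lim) (use h_pos in simp)
  moreover have "\<forall>\<^sub>F t in at_top. 0 < g0 t * g1 t * g2 t / (h0 * h1 * h2 * h3)"
    using eventually_ge_at_top[of 0] by eventually_elim (use g_pos h_pos in simp)
  ultimately have "filterlim (\<lambda>t. inverse (g0 t * g1 t * g2 t / (h0 * h1 * h2 * h3))) at_top at_top"
    by (intro filterlim_inverse_at_top) simp_all
  moreover have "\<forall>\<^sub>F t in at_top. inverse (g0 t * g1 t * g2 t / (h0 * h1 * h2 * h3)) = g3 t"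
  proof (rule eventually_mono[OF eventually_ge_at_top[of 0]])
    fix t :: real
    assume "t \<ge> 0"
    then show "inverse (g0 t * g1 t * g2 t / (h0 * h1 * h2 * h3)) = g3 t"
      using product_conserved[of t] g_pos[of t] h_pos by (simp add: field_simps)
  qed
  ultimately have "filterlim g3 at_top at_top"
    using filterlim_cong by fastforce
  then show ?thesis
    using g0_lim g1_lim g2_lim by blast
qed

lemma ratio_defect_bound:
  assumes "h1 \<le> h2" "t \<ge> 0"
  shows "(1 - g1 t / g2 t) ^ 4 \<le> shape h1 h2 / (8 * (h1 * h2) ^ 25) * g2 t ^ 40"
proof -
  define x y K where "x = g1 t" "y = g2 t" "K = shape h1 h2 / (h1 * h2) ^ 25"
  have xy: "0 < x" "x \<le> y"
    using g_pos[OF assms(2)] g1_le_g2[OF assms] by (auto simp: x_y_K_def)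
  have "K \<ge> 0"
    using shape_nonneg[of h1 h2] h_pos by (simp add: x_y_K_def)
  have "(y - x) ^ 4 * (2 * y^2) ^ 3 \<le> shape x y"
    unfolding shape_def using xy by (intro mult_left_mono power_mono) auto
  also have "shape x y = K * (x * y) ^ 25"
    using shape_conserved[OF assms(2)] h_pos by (simp add: x_y_K_def field_simps)
  also have "\<dots> \<le> K * (y * y) ^ 25"
    using xy \<open>K \<ge> 0\<close> by (intro mult_left_mono power_mono mult_right_mono) auto
  finally have "(y - x) ^ 4 * (8 * y^6) \<le> K * y ^ 50"
    by (simp add: power_mult_distrib flip: power_add)
  also have "K * y ^ 50 = (K / 8 * y ^ 44) * (8 * y^6)"
    by (simp flip: power_add)
  finally have "(y - x) ^ 4 \<le> K / 8 * y ^ 44"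
    by (rule mult_right_le_imp_le) (use xy in simp)
  also have "K / 8 * y ^ 44 = (K / 8 * y ^ 40) * y ^ 4"
    by (simp flip: power_add)
  also have "(y - x) ^ 4 = (1 - x / y) ^ 4 * y ^ 4"
    using xy by (simp add: power_mult_distrib[symmetric] left_diff_distrib)
  finally have "(1 - x / y) ^ 4 \<le> K / 8 * y ^ 40"
    by (rule mult_right_le_imp_le) (use xy in simp)
  then show ?thesis
    by (simp add: x_y_K_def)
qed

lemma ratio_tendsto_1_if_le:
  assumes "h1 \<le> h2"
  shows "((\<lambda>t. g1 t / g2 t) \<longlongrightarrow> 1) at_top"
proof -
  have "((\<lambda>t. shape h1 h2 / (8 * (h1 * h2) ^ 25) * g2 t ^ 40) \<longlongrightarrow> shape h1 h2 / (8 * (h1 * h2) ^ 25) * 0 ^ 40) at_top"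
    by (intro tendsto_intros g2_tendsto_0[OF assms])
  then have bound_lim: "((\<lambda>t. shape h1 h2 / (8 * (h1 * h2) ^ 25) * g2 t ^ 40) \<longlongrightarrow> 0) at_top"
    by simp
  have "\<forall>\<^sub>F t in at_top. (1 - g1 t / g2 t) ^ 4 \<le> shape h1 h2 / (8 * (h1 * h2) ^ 25) * g2 t ^ 40"
    using eventually_ge_at_top[of 0] by eventually_elim (rule ratio_defect_bound[OF assms])
  then have "((\<lambda>t. (1 - g1 t / g2 t) ^ 4) \<longlongrightarrow> 0) at_top"
    by (intro tendsto_sandwich[OF _ _ tendsto_const bound_lim]) simp_all
  then have "((\<lambda>t. 1 - g1 t / g2 t) \<longlongrightarrow> 0) at_top"
    by (rule tendsto_0_if_power_tendsto_0) simp
  then show ?thesis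
    using tendsto_diff[OF tendsto_const, of "\<lambda>t. 1 - g1 t / g2 t" 0 at_top 1] by simp
qed

lemma asymptotics:
  "(g0 \<longlongrightarrow> 0) at_top \<and> (g1 \<longlongrightarrow> 0) at_top \<and> (g2 \<longlongrightarrow> 0) at_top \<and> filterlim g3 at_top at_top \<and>
   ((\<lambda>t. g1 t / g2 t) \<longlongrightarrow> 1) at_top"
proof (cases "h1 \<le> h2")
  case True
  then show ?thesis
    using asymptotics_if_le ratio_tendsto_1_if_le by blast
next
  case False
  interpret swapped: bach_flow \<beta> h0 h2 h1 h3 g0 g2 g1 g3
    using beta_pos h_pos bach_solution_swap[OF solution] by unfold_locales
  have "((\<lambda>t. inverse (g2 t / g1 t)) \<longlongrightarrow> inverse 1) at_top"
    using False by (intro tendsto_inverse swapped.ratio_tendsto_1_if_le) auto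
  then show ?thesis
    using False swapped.asymptotics_if_le by simp
qed


lemma explicit_solution_if_eq:
  assumes "h1 = h2" "t \<ge> 0"
  defines "\<mu> \<equiv> h0^3 * h3 / (h0 * h1 * h2 * h3)"
  shows "g0 t = sqrt \<mu> * (24 * \<mu> * \<beta> * t + h1 powr (-6)) powr (-1/6) \<and>
    g1 t = (24 * \<mu> * \<beta> * t + h1 powr (-6)) powr (-1/6) \<and>
    g2 t = (24 * \<mu> * \<beta> * t + h1 powr (-6)) powr (-1/6) \<and>
    g3 t = h1^3 * h3 * (24 * \<mu> * \<beta> * t + h1 powr (-6)) powr (1/2)"
proof -
  have \<mu>: "\<mu> = h0^2 / h1^2"
    using h_pos assms(1) by (simp add: \<mu>_def power2_eq_square power3_eq_cube)
  have g2_eq: "g2 s = g1 s" if "s \<ge> 0" for s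
    using g1_eq_g2_if_eq[OF assms(1) that] by simp
  have g0_eq: "g0 s ^ 2 = \<mu> * g1 s ^ 2" if "s \<ge> 0" for s
    using g0_sq[OF that] g2_eq[OF that] assms(1) h_pos by (simp add: \<mu> power2_eq_square)
  \<comment> \<open>With \<open>g1 = g2\<close> the flow reduces to \<open>g1' = -4 \<mu> \<beta> g1^7\<close>, which makes \<open>g1^-6\<close> affine in time.\<close>
  have "((\<lambda>s. inverse (g1 s ^ 6) - 24 * \<mu> * \<beta> * s) has_real_derivative 0) (at s within {0..})"
    if s: "s \<ge> 0" for s
  proof -
    have "- real 6 * (- \<beta> * bq (g1 s) (g2 s) * g0 s ^ 2 * g1 s) / g1 s ^ Suc 6 = 24 * \<mu> * \<beta>"
      unfolding g0_eq[OF s] g2_eq[OF s] bq_diag using g_pos[OF s] by (simp add: field_simps eval_nat_numeral)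
    with DERIV_inverse_power[OF DERIV_g(2)[OF s], of 6] g_pos[OF s]
    have "((\<lambda>s. inverse (g1 s ^ 6)) has_real_derivative 24 * \<mu> * \<beta>) (at s within {0..})"
      by simp
    then show ?thesis
      by (rule DERIV_diff[THEN DERIV_cong]) (auto intro!: derivative_eq_intros)
  qed
  from DERIV_zero_imp_constant_atLeast[OF this assms(2)]
  have Z: "24 * \<mu> * \<beta> * t + h1 powr (-6) = g1 t powr (-6)"
    using initial h_pos g_pos[OF assms(2)] by (simp add: powr_minus powr_realpow divide_inverse)
  have g1_eq: "(24 * \<mu> * \<beta> * t + h1 powr (-6)) powr (-1/6) = g1 t"
    unfolding Z powr_powr using g_pos[OF assms(2)] by simp
  have g3_eq: "h1^3 * h3 * (24 * \<mu> * \<beta> * t + h1 powr (-6)) powr (1/2) = h1^3 * h3 / g1 t ^ 3"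
    unfolding Z powr_powr using g_pos[OF assms(2)] by (simp add: powr_neg_numeral)
  have g0_eq': "g0 t = h0 / h1 * g1 t"
    by (rule power2_eq_imp_eq)
      (use g0_eq[OF assms(2)] g_pos[OF assms(2)] h_pos in \<open>simp_all add: \<mu> power_mult_distrib power_divide\<close>)
  moreover have "sqrt \<mu> = h0 / h1"
    using h_pos by (simp add: \<mu> real_sqrt_divide)
  moreover have "g3 t = h1^3 * h3 / g1 t ^ 3"
  proof -
    have "h0 / h1 * g1 t ^ 3 * g3 t = h0 / h1 * (h1 ^ 3 * h3)"
      using product_conserved[OF assms(2)] h_pos unfolding g0_eq' g2_eq[OF assms(2)] assms(1)[symmetric]
      by (simp add: power3_eq_cube algebra_simps)
    then show ?thesis
      using g_pos[OF assms(2)] h_pos by (simp add: field_simps)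
  qed
  ultimately show ?thesis
    using g1_eq g3_eq g2_eq[OF assms(2)] by simp
qed

end

section \<open>Existence of solutions\<close>

text \<open>\<open>g0\<close> and \<open>g3\<close> are recovered from the invariants \<open>g0\<^sup>2 = c g1 g2\<close> and \<open>g0 g1 g2 g3 = h0 h1 h2 h3\<close>.\<close>
lemma bach_solution_of_reduced:
  fixes x y :: "real \<Rightarrow> real"
  assumes h_pos: "h0 > 0" "h1 > 0" "h2 > 0" and c: "c * h1 * h2 = h0\<^sup>2"
    and init: "x 0 = h1" "y 0 = h2"
    and pos: "\<And>t. t \<ge> 0 \<Longrightarrow> x t > 0 \<and> y t > 0"
    and der_x: "\<And>t. t \<ge> 0 \<Longrightarrow> (x has_real_derivative - \<beta> * bq (x t) (y t) * (c * x t * y t) * x t) (at t)"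
    and der_y: "\<And>t. t \<ge> 0 \<Longrightarrow> (y has_real_derivative - \<beta> * bq (y t) (x t) * (c * x t * y t) * y t) (at t)"
  shows "bach_solution \<beta> h0 h1 h2 h3 (\<lambda>t. sqrt (c * x t * y t)) x y
           (\<lambda>t. h0 * h1 * h2 * h3 / (sqrt (c * x t * y t) * x t * y t))"
proof -
  define g0 where "g0 t = sqrt (c * x t * y t)" for t
  have c_pos: "c > 0"
    using c h_pos by (metis zero_less_mult_pos2 zero_less_power)
  have g0_pos: "g0 t > 0" and g0_sq: "g0 t ^ 2 = c * x t * y t" if "t \<ge> 0" for t
    using pos[OF that] c_pos by (simp_all add: g0_def)
  have DERIV_g0: "(g0 has_real_derivative - \<beta> * bp (x t) (y t) * g0 t ^ 3) (at t)" if t: "t \<ge> 0" for t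
  proof -
    let ?D = "inverse (g0 t) / 2 * (c * (- \<beta> * bq (x t) (y t) * (c * x t * y t) * x t) * y t +
      c * x t * (- \<beta> * bq (y t) (x t) * (c * x t * y t) * y t))"
    have "(g0 has_real_derivative ?D) (at t)"
      unfolding g0_def[abs_def] using pos[OF t] c_pos
      by (auto intro!: derivative_eq_intros der_x[OF t] der_y[OF t]) (metis less_asym mult_pos_pos)
    moreover have "?D = - \<beta> * bp (x t) (y t) * g0 t ^ 3"
    proof -
      have cube: "g0 t ^ 3 = g0 t * (c * x t * y t)"
        using g0_sq[OF t] by (simp add: power3_eq_cube power2_eq_square)
      have inv: "inverse (g0 t) = g0 t / (c * x t * y t)"
        using g0_sq[OF t] g0_pos[OF t] pos[OF t] c_pos by (simp add: field_simps power2_eq_square)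
      show ?thesis
        unfolding cube inv using pos[OF t] c_pos by (simp add: field_simps double_bp_eq_bq_sum)
    qed
    ultimately show ?thesis
      by simp
  qed
  have der: "(g0 has_real_derivative - \<beta> * bp (x t) (y t) * g0 t ^ 3) (at t) \<and>
      (x has_real_derivative - \<beta> * bq (x t) (y t) * g0 t ^ 2 * x t) (at t) \<and>
      (y has_real_derivative - \<beta> * bq (y t) (x t) * g0 t ^ 2 * y t) (at t) \<and>
      ((\<lambda>t. h0 * h1 * h2 * h3 / (g0 t * x t * y t)) has_real_derivative
         3 * \<beta> * bp (x t) (y t) * g0 t ^ 2 * (h0 * h1 * h2 * h3 / (g0 t * x t * y t))) (at t)"
    if t: "t \<ge> 0" for t
  proof (intro conjI)
    show dx: "(x has_real_derivative - \<beta> * bq (x t) (y t) * g0 t ^ 2 * x t) (at t)"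
      using der_x[OF t] by (simp add: g0_sq[OF t])
    show dy: "(y has_real_derivative - \<beta> * bq (y t) (x t) * g0 t ^ 2 * y t) (at t)"
      using der_y[OF t] by (simp add: g0_sq[OF t])
    show "((\<lambda>t. h0 * h1 * h2 * h3 / (g0 t * x t * y t)) has_real_derivative
         3 * \<beta> * bp (x t) (y t) * g0 t ^ 2 * (h0 * h1 * h2 * h3 / (g0 t * x t * y t))) (at t)"
      by (rule derivative_eq_intros dx dy DERIV_g0[OF t] refl)+
        (use g0_pos[OF t] pos[OF t] in \<open>simp_all add: field_simps double_bp_eq_bq_sum power2_eq_square power3_eq_cube\<close>)
  qed (rule DERIV_g0[OF t])
  have "g0 0 = h0"
    using c h_pos init by (simp add: g0_def mult.assoc real_sqrt_unique)
  then show ?thesis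
    unfolding bach_solution_def g0_def[symmetric]
    using init h_pos der by (auto intro: has_field_derivative_at_within)
qed

lemma bach_solution_exists_if_eq:
  assumes "\<beta> > 0" "h0 > 0" "h1 > 0"
  shows "\<exists>g0 g1 g2 g3. bach_solution \<beta> h0 h1 h1 h3 g0 g1 g2 g3"
proof -
  define c where "c = h0^2 / h1^2"
  define Z where "Z t = 24 * c * \<beta> * t + h1 powr (-6)" for t
  define x where "x t = Z t powr (-1/6)" for t
  have "c > 0"
    using assms by (simp add: c_def)
  have Z_pos: "Z t > 0" if "t \<ge> 0" for t
    unfolding Z_def using that assms \<open>c > 0\<close> by (intro add_nonneg_pos) auto
  have x_pos: "x t > 0" if "t \<ge> 0" for t
    using Z_pos[OF that] by (simp add: x_def)
  have "(x has_real_derivative - \<beta> * bq (x t) (x t) * (c * x t * x t) * x t) (at t)" if t: "t \<ge> 0" for t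
  proof -
    have "(x has_real_derivative - 1/6 * Z t powr (- 1/6 - 1) * (24 * c * \<beta>)) (at t)"
      unfolding x_def[abs_def] Z_def[abs_def] using Z_pos[OF t]
      by (auto intro!: derivative_eq_intros simp: Z_def)
    moreover have "Z t powr (- 1/6 - 1) = x t ^ 7"
      using x_pos[OF t] by (simp add: x_def powr_powr flip: powr_realpow)
    ultimately show ?thesis
      by (simp add: bq_diag algebra_simps eval_nat_numeral)
  qed
  moreover have "x 0 = h1"
    using assms by (simp add: x_def Z_def powr_powr)
  moreover have "c * h1 * h1 = h0\<^sup>2"
    using assms by (simp add: c_def power2_eq_square)
  ultimately show ?thesis
    using bach_solution_of_reduced[of h0 h1 h1 c x x] assms x_pos by blast
qed

definition log_shape :: "real \<Rightarrow> real" where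
  "log_shape r = 4 * ln (1 - r) + 3 * ln (2 + r + 2 * r^2) - 25 * ln r"

lemma DERIV_log_shape:
  assumes "0 < r" "r < 1"
  shows "(log_shape has_real_derivative - 40 * bq 1 r / (r * (bq 1 r - bq r 1))) (at r)"
proof -
  define Q where "Q = 2 + r + 2 * r^2"
  have "0 < Q"
    using shape_quadratic_pos[of 1 r] by (simp add: Q_def add.commute)
  have "(- 4 / (1 - r) + 3 * (1 + 4 * r) / Q - 25 / r) * (r * (4 * (1 - r) * (1 + r) * Q)) = - 40 * bq 1 r"
    using assms \<open>0 < Q\<close> by (simp add: field_simps) (simp add: Q_def bq_def algebra_simps eval_nat_numeral)
  moreover have "r * (4 * (1 - r) * (1 + r) * Q) \<noteq> 0"
    using assms \<open>0 < Q\<close> by simp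
  ultimately have "- 4 / (1 - r) + 3 * (1 + 4 * r) / Q - 25 / r = - 40 * bq 1 r / (r * (bq 1 r - bq r 1))"
    unfolding bq_gap_factor Q_def[symmetric] by (simp only: eq_divide_eq) simp
  moreover have "(log_shape has_real_derivative - 4 / (1 - r) + 3 * (1 + 4 * r) / Q - 25 / r) (at r)"
    unfolding log_shape_def[abs_def] using assms \<open>0 < Q\<close>
    by (auto intro!: derivative_eq_intros simp: Q_def field_simps power2_eq_square)
  ultimately show ?thesis
    by simp
qed

locale bach_construction =
  fixes \<beta> h0 h1 h2 :: real
  assumes beta_pos: "\<beta> > 0" and h_pos: "h0 > 0" "h1 > 0" "h2 > 0" and h_less: "h1 < h2"
begin

definition "r0 = h1 / h2"

definition "c0 = h0^2 / (h1 * h2)"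

text \<open>\<open>log_shape r = ln (shape r 1 / r^25)\<close>, so by the invariant \<open>\<eta>\<close> the value of \<open>g2\<close> at the time
  when \<open>g1 / g2 = r\<close> is \<open>profile r\<close>, and \<open>speed r\<close> is the velocity of the ratio \<open>g1 / g2\<close> there.\<close>
definition "profile r = h2 * exp ((log_shape r - log_shape r0) / 40)"

definition "speed r = \<beta> * c0 * r^2 * profile r ^ 6 * (bq 1 r - bq r 1)"

lemma r0_bounds: "0 < r0" "r0 < 1"
  using h_pos h_less by (auto simp: r0_def)

lemma c0_pos: "c0 > 0"
  using h_pos by (simp add: c0_def)

lemma profile_pos: "profile r > 0"
  using h_pos by (simp add: profile_def)

lemma profile_r0: "profile r0 = h2"
  by (simp add: profile_def)

lemma DERIV_profile:
  assumes "0 < r" "r < 1"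
  shows "(profile has_real_derivative - profile r * bq 1 r / (r * (bq 1 r - bq r 1))) (at r)"
  unfolding profile_def[abs_def] using assms
  by (auto intro!: derivative_eq_intros DERIV_log_shape[THEN DERIV_cong])

lemma speed_pos: "0 < r \<Longrightarrow> r < 1 \<Longrightarrow> 0 < speed r"
  unfolding speed_def using beta_pos c0_pos profile_pos[of r] bq_gap_pos[of r] by (intro mult_pos_pos) auto

lemma continuous_on_speed: "continuous_on {0<..<1} speed"
proof -
  have "continuous_on {0<..<1} profile"
    using DERIV_profile by (intro continuous_at_imp_continuous_on ballI DERIV_isCont) force
  then show ?thesis
    unfolding speed_def bq_def by (intro continuous_intros)
qed

lemma speed_le: "\<exists>C > 0. \<forall>r. r0 \<le> r \<longrightarrow> r < 1 \<longrightarrow> speed r \<le> C * (1 - r)"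
proof -
  define M where "M = h2 * exp ((3 * ln 5 - 25 * ln r0 - log_shape r0) / 40)"
  have "speed r \<le> (40 * \<beta> * c0 * M ^ 6) * (1 - r)" if r: "r0 \<le> r" "r < 1" for r
  proof -
    have "0 < r"
      using r r0_bounds by simp
    have "log_shape r \<le> 3 * ln 5 - 25 * ln r0"
    proof -
      have "2 + r + 2 * r^2 \<le> 5"
        using r \<open>0 < r\<close> power_le_one[of r 2] by simp
      then have "ln (2 + r + 2 * r^2) \<le> ln 5"
        using shape_quadratic_pos[of 1 r] by (simp add: add.commute)
      moreover have "ln (1 - r) \<le> 0" "ln r0 \<le> ln r"
        using r r0_bounds by auto
      ultimately show ?thesis
        unfolding log_shape_def by linarith
    qed
    then have "profile r \<le> M"
      using h_pos by (simp add: profile_def M_def divide_right_mono)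
    then have "profile r ^ 6 \<le> M ^ 6"
      using profile_pos by (simp add: power_mono less_imp_le)
    moreover have "bq 1 r - bq r 1 \<le> 40 * (1 - r)"
    proof -
      have "(1 + r) * (2 + r + 2 * r^2) \<le> 2 * 5"
        using r \<open>0 < r\<close> power_le_one[of r 2] by (intro mult_mono) auto
      then show ?thesis
        unfolding bq_gap_factor using r mult_left_mono[of _ 10 "4 * (1 - r)"] by (simp add: mult.assoc)
    qed
    moreover have "r ^ 2 \<le> 1"
      using r \<open>0 < r\<close> by (simp add: power_le_one)
    ultimately have "r ^ 2 * profile r ^ 6 * (bq 1 r - bq r 1) \<le> 1 * M ^ 6 * (40 * (1 - r))"
      using bq_gap_pos[of r] \<open>0 < r\<close> r profile_pos by (intro mult_mono) auto
    then have "\<beta> * c0 * (r ^ 2 * profile r ^ 6 * (bq 1 r - bq r 1)) \<le> \<beta> * c0 * (1 * M ^ 6 * (40 * (1 - r)))"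
      using beta_pos c0_pos by (intro mult_left_mono) auto
    then show ?thesis
      by (simp add: speed_def mult.assoc mult.left_commute)
  qed
  moreover have "40 * \<beta> * c0 * M ^ 6 > 0"
    using beta_pos c0_pos h_pos by (simp add: M_def)
  ultimately show ?thesis
    by blast
qed

lemma bach_solution_exists_if_less: "\<exists>g0 g1 g2 g3. bach_solution \<beta> h0 h1 h2 h3 g0 g1 g2 g3"
proof -
  obtain C where "C > 0" "\<And>r. r0 \<le> r \<Longrightarrow> r < 1 \<Longrightarrow> speed r \<le> C * (1 - r)"
    using speed_le by blast
  then obtain R where R0: "R 0 = r0"
    and R: "\<And>t. t \<ge> 0 \<Longrightarrow> r0 \<le> R t \<and> R t < 1 \<and> (R has_real_derivative speed (R t)) (at t)"
    using exists_solution_autonomous_ode[OF r0_bounds continuous_on_speed speed_pos] by blast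
  define x where "x t = R t * profile (R t)" for t
  define y where "y t = profile (R t)" for t
  have "(x has_real_derivative - \<beta> * bq (x t) (y t) * (c0 * x t * y t) * x t) (at t) \<and>
      (y has_real_derivative - \<beta> * bq (y t) (x t) * (c0 * x t * y t) * y t) (at t)" if t: "t \<ge> 0" for t
  proof -
    define r where "r = R t"
    define G where "G = profile r"
    define q1 q2 where "q1 = bq 1 r" "q2 = bq r 1"
    have r: "0 < r" "r < 1"
      using R[OF t] r0_bounds by (auto simp: r_def)
    have "q1 - q2 \<noteq> 0"
      using bq_gap_pos[OF r] by (simp add: q1_q2_def)
    have R_der: "(R has_real_derivative \<beta> * c0 * r^2 * G^6 * (q1 - q2)) (at t)"
      using R[OF t] by (simp add: r_def G_def q1_q2_def speed_def)
    have y_der: "(y has_real_derivative - G * q1 / (r * (q1 - q2)) * (\<beta> * c0 * r^2 * G^6 * (q1 - q2))) (at t)"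
      unfolding y_def[abs_def] using DERIV_chain2[OF DERIV_profile[OF r[unfolded r_def]] R_der]
      by (simp add: r_def G_def q1_q2_def)
    have x_der: "(x has_real_derivative \<beta> * c0 * r^2 * G^6 * (q1 - q2) * G
        + - G * q1 / (r * (q1 - q2)) * (\<beta> * c0 * r^2 * G^6 * (q1 - q2)) * r) (at t)"
      unfolding x_def[abs_def] using DERIV_mult[OF R_der y_der[unfolded y_def]]
      by (simp only: r_def G_def)
    have xy: "x t = G * r" "y t = G * 1"
      by (simp_all add: x_def y_def r_def G_def)
    show ?thesis
    proof
      have "\<beta> * c0 * r^2 * G^6 * (q1 - q2) * G + - G * q1 / (r * (q1 - q2)) * (\<beta> * c0 * r^2 * G^6 * (q1 - q2)) * r
          = - \<beta> * (G^4 * q2) * (c0 * (G * r) * (G * 1)) * (G * r)"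
        using r \<open>q1 - q2 \<noteq> 0\<close> by (simp add: field_simps eval_nat_numeral)
      then show "(x has_real_derivative - \<beta> * bq (x t) (y t) * (c0 * x t * y t) * x t) (at t)"
        using x_der unfolding xy bq_scale by (simp add: q1_q2_def)
      have "- G * q1 / (r * (q1 - q2)) * (\<beta> * c0 * r^2 * G^6 * (q1 - q2))
          = - \<beta> * (G^4 * q1) * (c0 * (G * r) * (G * 1)) * (G * 1)"
        using r \<open>q1 - q2 \<noteq> 0\<close> by (simp add: field_simps eval_nat_numeral)
      then show "(y has_real_derivative - \<beta> * bq (y t) (x t) * (c0 * x t * y t) * y t) (at t)"
        using y_der unfolding xy bq_scale by (simp add: q1_q2_def)
    qed
  qed
  moreover have "x 0 = h1"
    using h_pos by (simp add: x_def R0 profile_r0) (simp add: r0_def)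
  moreover have "y 0 = h2"
    by (simp add: y_def R0 profile_r0)
  moreover have "c0 * h1 * h2 = h0\<^sup>2"
    using h_pos by (simp add: c0_def)
  moreover have "x t > 0 \<and> y t > 0" if "t \<ge> 0" for t
    using R[OF that] r0_bounds profile_pos by (simp add: x_def y_def)
  ultimately show ?thesis
    using bach_solution_of_reduced[of h0 h1 h2 c0 x y] h_pos by blast
qed

end

lemma bach_solution_exists:
  assumes "\<beta> > 0" "h0 > 0" "h1 > 0" "h2 > 0"
  shows "\<exists>g0 g1 g2 g3. bach_solution \<beta> h0 h1 h2 h3 g0 g1 g2 g3"
proof (cases h1 h2 rule: linorder_cases)
  case less
  interpret bach_construction \<beta> h0 h1 h2
    using assms less by unfold_locales
  show ?thesis
    by (rule bach_solution_exists_if_less)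
next
  case equal
  then show ?thesis
    using bach_solution_exists_if_eq[OF assms(1-3)] by simp
next
  case greater
  interpret bach_construction \<beta> h0 h2 h1
    using assms greater by unfold_locales
  obtain g0 g1 g2 g3 where "bach_solution \<beta> h0 h2 h1 h3 g0 g1 g2 g3"
    using bach_solution_exists_if_less by blast
  then show ?thesis
    using bach_solution_swap by blast
qed

theorem theorem5p3:
  fixes h0 h1 h2 h3 :: real
  assumes "h0 > 0" "h1 > 0" "h2 > 0" "h3 > 0"
  defines "dh \<equiv> h0 * h1 * h2 * h3"
  defines "\<beta> \<equiv> 1 / (6 * dh^2)"
  shows
    "(\<exists>g0 g1 g2 g3. bach_solution \<beta> h0 h1 h2 h3 g0 g1 g2 g3) \<and>
     (\<forall>g0 g1 g2 g3. bach_solution \<beta> h0 h1 h2 h3 g0 g1 g2 g3 \<longrightarrow>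
        (g0 \<longlongrightarrow> 0) at_top \<and> (g1 \<longlongrightarrow> 0) at_top \<and> (g2 \<longlongrightarrow> 0) at_top \<and>
        strict_mono_on {0..} g3 \<and> filterlim g3 at_top at_top \<and>
        ((\<lambda>t. g1 t / g2 t) \<longlongrightarrow> 1) at_top \<and>
        (h1 = h2 \<longrightarrow>
           (let \<mu> = h0^3 * h3 / dh in
            \<forall>t\<ge>0.
              g0 t = sqrt \<mu> * (24 * \<mu> * \<beta> * t + h1 powr (-6)) powr (-1/6) \<and>
              g1 t = (24 * \<mu> * \<beta> * t + h1 powr (-6)) powr (-1/6) \<and>
              g2 t = (24 * \<mu> * \<beta> * t + h1 powr (-6)) powr (-1/6) \<and>
              g3 t = h1^3 * h3 * (24 * \<mu> * \<beta> * t + h1 powr (-6)) powr (1/2))) \<and>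
        (h1 < h2 \<longrightarrow>
           (\<forall>t\<ge>0. g1 t < g2 t) \<and>
           strict_antimono_on {0..} g2 \<and>
           strict_mono_on {0..} (\<lambda>t. g1 t / g2 t) \<and>
           (let \<eta> = (h1 * h2)^25 / ((h2 - h1)^4 * (2*h2^2 + h1*h2 + 2*h1^2)^3) in
            \<forall>t\<ge>0. (g1 t * g2 t)^25 =
                    \<eta> * (g2 t - g1 t)^4 * (2 * (g2 t)^2 + g1 t * g2 t + 2 * (g1 t)^2)^3)))"
proof -
  have "\<beta> > 0"
    using assms by (simp add: \<beta>_def dh_def)
  then have flow: "bach_flow \<beta> h0 h1 h2 h3 g0 g1 g2 g3" if "bach_solution \<beta> h0 h1 h2 h3 g0 g1 g2 g3"
    for g0 g1 g2 g3
    using that assms by unfold_locales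
  show ?thesis
    unfolding Let_def dh_def
    apply (rule conjI)
     apply (rule bach_solution_exists[OF \<open>\<beta> > 0\<close> assms(1-3)])
    apply (intro allI impI)
    subgoal premises solution for g0 g1 g2 g3
    proof -
      interpret bach_flow \<beta> h0 h1 h2 h3 g0 g1 g2 g3
        by (rule flow[OF solution])
      have "(g1 t * g2 t)^25 = (h1 * h2)^25 / ((h2 - h1)^4 * (2*h2^2 + h1*h2 + 2*h1^2)^3) *
          (g2 t - g1 t)^4 * (2 * (g2 t)^2 + g1 t * g2 t + 2 * (g1 t)^2)^3" if "h1 < h2" "t \<ge> 0" for t
        using eta_identity[OF that] by (simp add: shape_def mult.assoc)
      then show ?thesis
        using asymptotics g3_strict_mono explicit_solution_if_eq g1_less_g2 g2_strict_antimono ratio_strict_mono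
        by blast
    qed
    done
qed

end
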